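(* Let $n\ge1$ and let $f\in\mathcal{G}_1$ be $n$-ary, $f=2x_1\cdots x_n\left(\sum_{i=1}^n a_ix_i^2+\sum_{i=1}^n b_ix_i+c\right)$, with $a_i\neq 0$ for some $i$. Then $2w_n\in C(f)$ or $2q_n\in C(f)$, where $w_n=x_1\cdots x_n(x_1^2+1)$ and $q_n=x_1^3x_2\cdots x_n$.
   Context: All operations are on $\mathbb{Z}_8$. $\mathcal{G}_1$ is the set of all operations (of any arity $n\ge1$) of the form $2x_1\cdots x_n\left(\sum_{i=1}^n a_ix_i^2+\sum_{i=1}^n b_ix_i+c\right)$ with $a_i,b_i\in\{0,1\}$ and $c\in\{0,1,2,3\}$. For an operation $f$, $C(f)$ denotes the clone generated by $f$ together with binary addition and all unary constant operations. *)

theory Defs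
  imports Main "HOL-Library.Numeral_Type"
begin

text \<open>Operations on Z_8 (the type 8 from Numeral_Type).  An n-ary operation is
represented as a pair (n, f) with f :: (nat => 8) => 8, where only the arguments
x 0, ..., x (n-1) are meant to matter.\<close>

type_synonym op8 = "nat \<times> ((nat \<Rightarrow> 8) \<Rightarrow> 8)"

inductive_set clone_gen :: "op8 set \<Rightarrow> op8 set" for F :: "op8 set" where
  proj: "i < n \<Longrightarrow> (n, \<lambda>x. x i) \<in> clone_gen F"
| gen: "p \<in> F \<Longrightarrow> p \<in> clone_gen F"
| comp: "(m, g) \<in> clone_gen F \<Longrightarrow> (\<forall>j<m. (n, hs j) \<in> clone_gen F)
          \<Longrightarrow> (n, \<lambda>x. g (\<lambda>j. hs j x)) \<in> clone_gen F"

definition C :: "op8 \<Rightarrow> op8 set" where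
  "C f = clone_gen ({f, (2, \<lambda>x. x 0 + x 1)} \<union> {(1, \<lambda>x. c) | c. True})"

text \<open>Members of G_1 (indices 0-based).\<close>

definition G1_op :: "nat \<Rightarrow> (nat \<Rightarrow> 8) \<Rightarrow> (nat \<Rightarrow> 8) \<Rightarrow> 8 \<Rightarrow> op8" where
  "G1_op n a b c = (n, \<lambda>x. 2 * (\<Prod>i<n. x i) *
       ((\<Sum>i<n. a i * (x i)^2) + (\<Sum>i<n. b i * x i) + c))"

definition w_op :: "nat \<Rightarrow> (nat \<Rightarrow> 8) \<Rightarrow> 8" where
  "w_op n x = (\<Prod>i<n. x i) * ((x 0)^2 + 1)"

definition q_op :: "nat \<Rightarrow> (nat \<Rightarrow> 8) \<Rightarrow> 8" where
  "q_op n x = (x 0)^3 * (\<Prod>i\<in>{1..<n}. x i)"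

end

theory Submission
  imports Defs "HOL-Combinatorics.Transposition"
begin

text \<open>Write \<open>P = x\<^sub>1\<cdots>x\<^sub>n\<close>. As a function of a single variable \<open>x\<^sub>j\<close>, \<open>f\<close> has the form
\<open>2 x\<^sub>j R (a\<^sub>j x\<^sub>j\<^sup>2 + b\<^sub>j x\<^sub>j + T)\<close> with \<open>R\<close>, \<open>T\<close> independent of \<open>x\<^sub>j\<close>, so the polarisation
\<open>f(x\<^sub>j := x\<^sub>j + h) - f(x\<^sub>j := h) - f\<close> cancels \<open>T\<close> and leaves \<open>2P (a\<^sub>j (3 x\<^sub>j h + 3 h\<^sup>2) + 2 b\<^sub>j h)\<close>.
With \<open>a\<^sub>i = 1\<close> and \<open>h = 1\<close> this gives \<open>2P (3 x\<^sub>i + 3 + 2 b\<^sub>i)\<close>, and polarising that once more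
gives \<open>12P = 4P\<close>. If some other \<open>a\<^sub>j = 1\<close>, the polarisations at \<open>x\<^sub>i\<close> and \<open>x\<^sub>j\<close> with \<open>h = 1\<close> and at
\<open>x\<^sub>j\<close> with \<open>h = x\<^sub>i\<close> add up to \<open>2P (x\<^sub>i\<^sup>2 + 1 + 2 b\<^sub>i)\<close>; otherwise subtracting multiples of
\<open>2P (3 x\<^sub>l + 3 + 2 b\<^sub>i)\<close> (a permuted copy of the first polarisation) removes the linear terms
of \<open>f\<close>. Either way \<open>2P (x\<^sub>i\<^sup>2 + t)\<close> lies in the clone; moving \<open>x\<^sub>i\<close> to the first position and
subtracting a multiple of \<open>4P\<close> makes \<open>t\<close> equal to \<open>0\<close> or \<open>1\<close>, which gives \<open>2q\<^sub>n\<close> or \<open>2w\<^sub>n\<close>.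
Of the restrictions on the coefficients only \<open>a\<^sub>i \<in> {0, 1}\<close> is needed.\<close>

lemma Z8_cases: "(x::8) = 0 \<or> x = 1 \<or> x = 2 \<or> x = 3 \<or> x = 4 \<or> x = 5 \<or> x = 6 \<or> x = 7"
proof (induct x)
  case (of_int z)
  then have "z = 0 \<or> z = 1 \<or> z = 2 \<or> z = 3 \<or> z = 4 \<or> z = 5 \<or> z = 6 \<or> z = 7"
    by auto
  then show ?case by auto
qed

lemma Z8_of_nat_surj: "\<exists>m. (k::8) = of_nat m"
proof (induct k)
  case (of_int z)
  then show ?case by (metis of_nat_nat)
qed

text \<open>\<open>simp\<close> decides equations between numerals of type \<open>8\<close>, but does not reduce a numeral
  occurring inside a larger term; these two facts are used as explicit rewrite rules.\<close>

lemma Z8_twelve_eq_four: "(12::8) = 4"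
  by simp

lemma Z8_sixteen_eq_zero: "(16::8) = 0"
  by simp

lemma Z8_two_quadratic_vars_identity:
  "2*x*y*((3*x + 3) + (3*y + 3 + 2*b) + (3*y*x + 3*x^2 + 2*b*x)) = 2*x*y*(x^2 + (1::8))"
  using Z8_cases[of x] Z8_cases[of y] Z8_cases[of b] by auto

lemma C_self: "f \<in> C f"
  unfolding C_def by (rule clone_gen.gen) simp

lemma C_proj: "i < n \<Longrightarrow> (n, \<lambda>x. x i) \<in> C f"
  unfolding C_def by (rule clone_gen.proj)

lemma C_comp:
  "(m, g) \<in> C f \<Longrightarrow> (\<And>j. j < m \<Longrightarrow> (n, hs j) \<in> C f) \<Longrightarrow> (n, \<lambda>x. g (\<lambda>j. hs j x)) \<in> C f"
  unfolding C_def by (rule clone_gen.comp) auto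

lemma C_fun_upd:
  assumes "(n, F) \<in> C f" "i < n" "(n, h) \<in> C f"
  shows "(n, \<lambda>x. F (x(i := h x))) \<in> C f"
proof -
  have "(n, \<lambda>x. F (\<lambda>j. (x(i := h x)) j)) \<in> C f"
  proof (rule C_comp[OF assms(1)])
    fix j assume "j < n"
    then show "(n, \<lambda>x. (x(i := h x)) j) \<in> C f"
      using assms(3) by (cases "j = i") (auto intro: C_proj)
  qed
  then show ?thesis by (simp add: fun_upd_def)
qed

lemma C_reindex:
  assumes "(n, F) \<in> C f" "\<And>l. l < n \<Longrightarrow> \<sigma> l < n"
  shows "(n, \<lambda>x. F (x \<circ> \<sigma>)) \<in> C f"
  using C_comp[OF assms(1), of n "\<lambda>l x. x (\<sigma> l)"] assms(2) by (simp add: C_proj comp_def)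

lemma C_cong: "(n, F) \<in> C f \<Longrightarrow> (\<And>x. F x = H x) \<Longrightarrow> (n, H) \<in> C f"
  by (metis ext)

lemma C_add:
  assumes "(n, F) \<in> C f" "(n, H) \<in> C f"
  shows "(n, \<lambda>x. F x + H x) \<in> C f"
proof -
  have plus: "(2, \<lambda>x. x 0 + x 1) \<in> C f"
    unfolding C_def by (rule clone_gen.gen) simp
  have "(n, \<lambda>x. (\<lambda>y. y 0 + y 1) (\<lambda>j::nat. (if j = 0 then F else H) x)) \<in> C f"
    using assms by (intro C_comp[OF plus]) (auto simp: less_2_cases_iff)
  then show ?thesis by simp
qed

lemma C_const:
  assumes "0 < n" shows "(n, \<lambda>x. k) \<in> C f"
proof -
  have const: "(1, \<lambda>x. k) \<in> C f"
    unfolding C_def by (rule clone_gen.gen) auto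
  show ?thesis
    using C_comp[OF const, of n "\<lambda>_ x. x 0"] assms by (simp add: C_proj)
qed

lemma C_mult_const:
  assumes "0 < n" "(n, F) \<in> C f"
  shows "(n, \<lambda>x. k * F x) \<in> C f"
proof -
  have "(n, \<lambda>x. of_nat m * F x) \<in> C f" for m
  proof (induction m)
    case 0
    then show ?case using C_const[OF assms(1), of 0 f] by simp
  next
    case (Suc m)
    from C_add[OF Suc assms(2)] show ?case by (simp add: algebra_simps)
  qed
  then show ?thesis using Z8_of_nat_surj[of k] by auto
qed

lemma C_diff:
  assumes "0 < n" "(n, F) \<in> C f" "(n, H) \<in> C f"
  shows "(n, \<lambda>x. F x - H x) \<in> C f"
  using C_add[OF assms(2) C_mult_const[OF assms(1,3), of "-1"]] by simp

lemma C_sum: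
  fixes N :: nat
  assumes "0 < n" "\<And>l. l < N \<Longrightarrow> (n, F l) \<in> C f"
  shows "(n, \<lambda>x. \<Sum>l<N. F l x) \<in> C f"
  using assms(2)
proof (induction N)
  case 0
  then show ?case using C_const[OF assms(1), of 0 f] by simp
next
  case (Suc N)
  then show ?case using C_add[of n "\<lambda>x. \<Sum>l<N. F l x" f "F N"] by simp
qed

definition prod_vars :: "nat \<Rightarrow> (nat \<Rightarrow> 'a::comm_monoid_mult) \<Rightarrow> 'a" where
  "prod_vars n x = (\<Prod>i<n. x i)"

lemma prod_vars_fun_upd:
  "j < n \<Longrightarrow> prod_vars n (x(j := v)) = v * (\<Prod>l\<in>{..<n}-{j}. x l)"
proof -
  assume "j < n"
  then have "prod_vars n (x(j := v)) = v * (\<Prod>l\<in>{..<n}-{j}. (x(j := v)) l)"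
    unfolding prod_vars_def by (simp add: prod.remove)
  also have "(\<Prod>l\<in>{..<n}-{j}. (x(j := v)) l) = (\<Prod>l\<in>{..<n}-{j}. x l)"
    by (rule prod.cong) auto
  finally show ?thesis .
qed

lemma prod_vars_transpose:
  assumes "i < n" "l < n"
  shows "prod_vars n (x \<circ> transpose i l) = prod_vars n x"
proof -
  have "inj_on (transpose i l) {..<n}"
    by (meson inj_onI transpose_eq_imp_eq)
  then have "prod x (transpose i l ` {..<n}) = prod (x \<circ> transpose i l) {..<n}"
    by (rule prod.reindex)
  then show ?thesis
    unfolding prod_vars_def using assms by simp
qed

lemma prod_vars_split_first:
  "0 < n \<Longrightarrow> prod_vars n x = x 0 * (\<Prod>i\<in>{1..<n}. x i)"
  unfolding prod_vars_def lessThan_atLeast0 by (simp add: prod.atLeast_Suc_lessThan)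

lemma C_transpose_var:
  assumes "(n, \<lambda>x. G (prod_vars n x) (x i)) \<in> C f" "i < n" "l < n"
  shows "(n, \<lambda>x. G (prod_vars n x) (x l)) \<in> C f"
proof -
  have "\<And>j. j < n \<Longrightarrow> transpose i l j < n"
    using assms(2,3) by (simp add: transpose_def)
  with C_reindex[OF assms(1), of "transpose i l"] show ?thesis
    by (simp add: prod_vars_transpose assms(2,3))
qed

lemma C_polarize:
  assumes "j < n" and T_indep: "\<And>x v. T (x(j := v)) = T x"
    and F: "(n, \<lambda>x. 2 * prod_vars n x * (\<alpha> * (x j)^2 + \<beta> * x j + T x)) \<in> C f"
    and h: "(n, h) \<in> C f"
  shows "(n, \<lambda>x. 2 * prod_vars n x * (\<alpha> * (3 * x j * h x + 3 * (h x)^2) + 2 * \<beta> * h x)) \<in> C f"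
proof -
  let ?F = "\<lambda>x. 2 * prod_vars n x * (\<alpha> * (x j)^2 + \<beta> * x j + T x)"
  have n: "0 < n" using assms(1) by simp
  have "(n, \<lambda>x. ?F (x(j := x j + h x)) - ?F (x(j := h x)) - ?F x) \<in> C f"
    by (intro C_diff n C_fun_upd C_add C_proj F h assms(1))
  then show ?thesis
  proof (rule C_cong)
    fix x :: "nat \<Rightarrow> 8"
    define R where "R = (\<Prod>l\<in>{..<n}-{j}. x l)"
    have upd: "?F (x(j := v)) = 2 * v * R * (\<alpha> * v^2 + \<beta> * v + T x)" for v :: 8
      using assms(1) by (simp add: prod_vars_fun_upd R_def T_indep)
    have "?F x = ?F (x(j := x j))" by simp
    then show "?F (x(j := x j + h x)) - ?F (x(j := h x)) - ?F x
        = 2 * prod_vars n x * (\<alpha> * (3 * x j * h x + 3 * (h x)^2) + 2 * \<beta> * h x)"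
      using prod_vars_fun_upd[OF assms(1), of x "x j"]
      by (simp only: upd R_def[symmetric]) (simp add: algebra_simps power2_eq_square)
  qed
qed

lemma G1_op_in_C:
  "(n, \<lambda>x. 2 * prod_vars n x * ((\<Sum>i<n. a i * (x i)^2) + (\<Sum>i<n. b i * x i) + c))
     \<in> C (G1_op n a b c)"
  using C_self[of "G1_op n a b c"] by (simp add: G1_op_def prod_vars_def)

lemma G1_op_cubic_in_var:
  assumes "j < n"
  obtains T where "\<And>x v. T (x(j := v)) = T x"
    and "(n, \<lambda>x. 2 * prod_vars n x * (a j * (x j)^2 + b j * x j + T x)) \<in> C (G1_op n a b c)"
proof -
  define T where "T x = (\<Sum>l\<in>{..<n}-{j}. a l * (x l)^2 + b l * x l) + c" for x :: "nat \<Rightarrow> 8"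
  have "T (x(j := v)) = T x" for x v
    unfolding T_def by (auto intro!: sum.cong)
  moreover have "(\<Sum>l<n. a l * (x l)^2) + (\<Sum>l<n. b l * x l) + c = a j * (x j)^2 + b j * x j + T x"
    for x
    using assms by (simp add: T_def sum.distrib[symmetric] sum.remove algebra_simps)
  ultimately show thesis
    using that[of T] G1_op_in_C[of n a b c] by simp
qed

lemma G1_polarize:
  assumes "j < n" "(n, h) \<in> C (G1_op n a b c)"
  shows "(n, \<lambda>x. 2 * prod_vars n x * (a j * (3 * x j * h x + 3 * (h x)^2) + 2 * b j * h x))
           \<in> C (G1_op n a b c)"
proof -
  obtain T where "\<And>x v. T (x(j := v)) = T x"
    and "(n, \<lambda>x. 2 * prod_vars n x * (a j * (x j)^2 + b j * x j + T x)) \<in> C (G1_op n a b c)"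
    using G1_op_cubic_in_var[OF assms(1), where a = a and b = b and c = c] by blast
  from C_polarize[OF assms(1) this assms(2)] show ?thesis .
qed

lemma G1_polarize_one:
  assumes "i < n" "a i = 1"
  shows "(n, \<lambda>x. 2 * prod_vars n x * (3 * x i + 3 + 2 * b i)) \<in> C (G1_op n a b c)"
  using G1_polarize[of i n "\<lambda>_. 1" a b c] C_const[of n 1] assms by (simp add: algebra_simps)

lemma G1_four_prod_vars:
  assumes "i < n" "a i = 1"
  shows "(n, \<lambda>x. 4 * prod_vars n x) \<in> C (G1_op n a b c)"
proof -
  have n: "0 < n" using assms(1) by simp
  have "(n, \<lambda>x. 2 * prod_vars n x * (0 * (x i)^2 + 3 * x i + (3 + 2 * b i))) \<in> C (G1_op n a b c)"
    using G1_polarize_one[of i n a b c] assms by (simp add: add.assoc)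
  from C_polarize[OF assms(1) _ this C_const[OF n, of 1]]
  have "(n, \<lambda>x. 2 * prod_vars n x * (0 * (3 * x i * 1 + 3 * 1^2) + 2 * 3 * 1)) \<in> C (G1_op n a b c)"
    by simp
  then show ?thesis
    by (rule C_cong) (simp add: algebra_simps Z8_twelve_eq_four)
qed

lemma G1_two_quadratic_vars:
  assumes "i < n" "j < n" "i \<noteq> j" "a i = 1" "a j = 1"
  shows "(n, \<lambda>x. 2 * prod_vars n x * ((x i)^2 + (1 + 2 * b i))) \<in> C (G1_op n a b c)"
proof -
  have "(n, \<lambda>x. 2 * prod_vars n x * (3 * x i + 3 + 2 * b i) + 2 * prod_vars n x * (3 * x j + 3 + 2 * b j)
      + 2 * prod_vars n x * (a j * (3 * x j * x i + 3 * (x i)^2) + 2 * b j * x i)) \<in> C (G1_op n a b c)"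
    using assms by (intro C_add G1_polarize_one G1_polarize C_proj)
  then show ?thesis
  proof (rule C_cong)
    fix x :: "nat \<Rightarrow> 8"
    have "x i * x j dvd prod_vars n x"
      unfolding prod_vars_def using prod_dvd_prod_subset[of "{..<n}" "{i, j}" x] assms by simp
    then obtain R where P: "prod_vars n x = x i * x j * R"
      by (auto elim: dvdE)
    have "R * (2*x i*x j*((3*x i + 3) + (3*x j + 3 + 2*b j) + (3*x j*x i + 3*(x i)^2 + 2*b j*x i)))
        + 4 * prod_vars n x * b i = R * (2*x i*x j*((x i)^2 + 1)) + 4 * prod_vars n x * b i"
      by (simp only: Z8_two_quadratic_vars_identity)
    then show "2 * prod_vars n x * (3 * x i + 3 + 2 * b i) + 2 * prod_vars n x * (3 * x j + 3 + 2 * b j)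
      + 2 * prod_vars n x * (a j * (3 * x j * x i + 3 * (x i)^2) + 2 * b j * x i)
      = 2 * prod_vars n x * ((x i)^2 + (1 + 2 * b i))"
      unfolding P using assms(5) by (simp add: algebra_simps)
  qed
qed

lemma G1_one_quadratic_var:
  assumes "i < n" "a i = 1" "\<And>l. l < n \<Longrightarrow> l \<noteq> i \<Longrightarrow> a l = 0"
  shows "(n, \<lambda>x. 2 * prod_vars n x * ((x i)^2 + (c - (1 + 6 * b i) * (\<Sum>l<n. b l))))
           \<in> C (G1_op n a b c)"
proof -
  have n: "0 < n" using assms(1) by simp
  have linear: "(n, \<lambda>x. 2 * prod_vars n x * (x l + 1 + 6 * b i)) \<in> C (G1_op n a b c)"
    if "l < n" for l
  proof -
    have "(n, \<lambda>x. 2 * prod_vars n x * (3 * x l + 3 + 2 * b i)) \<in> C (G1_op n a b c)"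
      using C_transpose_var[where G = "\<lambda>p y. 2 * p * (3 * y + 3 + 2 * b i)", OF _ assms(1) that]
        G1_polarize_one[of i n a b c] assms by simp
    \<comment> \<open>\<open>3 \<cdot> 3 = 1\<close> in \<open>\<int>\<^sub>8\<close>\<close>
    from C_mult_const[OF n this, of 3] show ?thesis
      by (rule C_cong) (simp add: algebra_simps Z8_sixteen_eq_zero)
  qed
  have "(n, \<lambda>x. 2 * prod_vars n x * ((\<Sum>l<n. a l * (x l)^2) + (\<Sum>l<n. b l * x l) + c)
      - (\<Sum>l<n. b l * (2 * prod_vars n x * (x l + 1 + 6 * b i)))) \<in> C (G1_op n a b c)"
    by (intro C_diff n G1_op_in_C C_sum C_mult_const linear)
  then show ?thesis
  proof (rule C_cong)
    fix x :: "nat \<Rightarrow> 8"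
    have "(\<Sum>l<n. a l * (x l)^2) = (\<Sum>l<n. if l = i then (x i)^2 else 0)"
      using assms by (intro sum.cong) auto
    then have squares: "(\<Sum>l<n. a l * (x l)^2) = (x i)^2"
      using assms(1) by simp
    have linears: "(\<Sum>l<n. b l * (2 * prod_vars n x * (x l + 1 + 6 * b i)))
        = 2 * prod_vars n x * (\<Sum>l<n. b l * x l) + 2 * prod_vars n x * ((1 + 6 * b i) * (\<Sum>l<n. b l))"
      by (simp add: sum.distrib sum_distrib_left sum_distrib_right algebra_simps)
    show "2 * prod_vars n x * ((\<Sum>l<n. a l * (x l)^2) + (\<Sum>l<n. b l * x l) + c)
        - (\<Sum>l<n. b l * (2 * prod_vars n x * (x l + 1 + 6 * b i)))
        = 2 * prod_vars n x * ((x i)^2 + (c - (1 + 6 * b i) * (\<Sum>l<n. b l)))"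
      unfolding squares linears by (simp add: algebra_simps)
  qed
qed

lemma C_two_w_or_two_q:
  assumes "i < n"
    and square: "(n, \<lambda>x. 2 * prod_vars n x * ((x i)^2 + t)) \<in> C f"
    and four: "(n, \<lambda>x. 4 * prod_vars n x) \<in> C f"
  shows "(n, \<lambda>x. 2 * w_op n x) \<in> C f \<or> (n, \<lambda>x. 2 * q_op n x) \<in> C f"
proof -
  have n: "0 < n" using assms(1) by simp
  have square0: "(n, \<lambda>x. 2 * prod_vars n x * ((x 0)^2 + t)) \<in> C f"
    using C_transpose_var[where G = "\<lambda>p y. 2 * p * (y^2 + t)", OF _ assms(1) n] square by simp
  obtain m where m: "t = of_nat m" using Z8_of_nat_surj by blast
  define s :: 8 where "s = of_nat (m div 2)"
  have t: "t = of_nat (m mod 2) + 2 * s"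
    unfolding m s_def by (metis mod_mult_div_eq of_nat_add of_nat_mult of_nat_numeral)
  have reduced: "(n, \<lambda>x. 2 * prod_vars n x * ((x 0)^2 + t) - s * (4 * prod_vars n x)) \<in> C f"
    by (intro C_diff n square0 C_mult_const four)
  show ?thesis
  proof (cases "even m")
    case True
    have "(n, \<lambda>x. 2 * q_op n x) \<in> C f"
      using reduced proof (rule C_cong)
      fix x :: "nat \<Rightarrow> 8"
      show "2 * prod_vars n x * ((x 0)^2 + t) - s * (4 * prod_vars n x) = 2 * q_op n x"
        unfolding q_op_def prod_vars_split_first[OF n] t using True
        by (simp add: algebra_simps power2_eq_square power3_eq_cube)
    qed
    then show ?thesis ..
  next
    case False
    have "(n, \<lambda>x. 2 * w_op n x) \<in> C f"
      using reduced proof (rule C_cong)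
      fix x :: "nat \<Rightarrow> 8"
      show "2 * prod_vars n x * ((x 0)^2 + t) - s * (4 * prod_vars n x) = 2 * w_op n x"
        unfolding w_op_def prod_vars_def[symmetric] t using False
        by (simp add: algebra_simps odd_iff_mod_2_eq_one)
    qed
    then show ?thesis ..
  qed
qed

theorem lemma4p4:
  fixes n :: nat and a b :: "nat \<Rightarrow> 8" and c :: 8
  assumes "n \<ge> 1"
    and "\<forall>i<n. a i \<in> {0, 1}" and "\<forall>i<n. b i \<in> {0, 1}"
    and "c \<in> {0, 1, 2, 3}"
    and "\<exists>i<n. a i \<noteq> 0"
  shows "(n, \<lambda>x. 2 * w_op n x) \<in> C (G1_op n a b c)
       \<or> (n, \<lambda>x. 2 * q_op n x) \<in> C (G1_op n a b c)"
proof -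
  obtain i where i: "i < n" "a i \<noteq> 0" using assms(5) by blast
  with assms(2) have ai: "a i = 1" by auto
  have four: "(n, \<lambda>x. 4 * prod_vars n x) \<in> C (G1_op n a b c)"
    using G1_four_prod_vars[of i n a b c] i(1) ai .
  obtain t where "(n, \<lambda>x. 2 * prod_vars n x * ((x i)^2 + t)) \<in> C (G1_op n a b c)"
  proof (cases "\<exists>j<n. j \<noteq> i \<and> a j \<noteq> 0")
    case True
    then obtain j where j: "j < n" "i \<noteq> j" "a j = 1" using assms(2) by blast
    show thesis
      by (rule that, rule G1_two_quadratic_vars[OF i(1) j(1,2) ai j(3)])
  next
    case False
    then have others: "\<And>l. l < n \<Longrightarrow> l \<noteq> i \<Longrightarrow> a l = 0" by blast
    show thesis
      by (rule that, rule G1_one_quadratic_var[where a = a, OF i(1) ai others])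
  qed
  then show ?thesis
    by (rule C_two_w_or_two_q[OF i(1) _ four])
qed

end
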